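(* Let $(A,a),(B,b),(C,c),(D,d)$ be four flags in $\mathbb{RP}^2$ in generic position. Let $X$ be the triple ratio of $(A,a),(B,b),(C,c)$; let $Y$ be the triple ratio of $(A,a),(C,c),(D,d)$; let $Z$ be the cross-ratio of the four lines $a, AB, AC, AD$ through $A$ (in this order); and let $W$ be the cross-ratio of the four lines $c, CD, CA, CB$ through $C$ (in this order). Then the convex quadrangle $ABCD$ is inscribed into the convex quadrangle $abcd$ if and only if $X,Y,Z,W$ are all positive.
   Context: A flag in $\mathbb{RP}^2$ is a pair $(A,a)$ of a point $A$ and a line $a\ni A$. The triple ratio of flags $(A,a),(B,b),(C,c)$ is $\frac{f_a(\tilde B)f_b(\tilde C)f_c(\tilde A)}{f_a(\tilde C)f_b(\tilde A)f_c(\tilde B)}$, where $f_a,f_b,f_c\in(\mathbb R^3)^*$ have kernels the planes corresponding to $a,b,c$ and $\tilde A,\tilde B,\tilde C$ are nonzero lifts of $A,B,C$ to $\mathbb R^3$. The cross-ratio of four points $x_1,x_2,x_3,x_4$ on a projective line (or of four concurrent lines, viewed as points of the projective line of lines through their common point) is $\frac{(x_1-x_2)(x_3-x_4)}{(x_1-x_4)(x_2-x_3)}$ in any affine coordinate. "The convex quadrangle $ABCD$ is inscribed into the convex quadrangle $abcd$" means: in some affine chart $\mathbb R^2\subset\mathbb{RP}^2$, the lines $a,b,c,d$ bound a compact convex quadrilateral whose sides, in cyclic order, lie on $a,b,c,d$, and $A,B,C,D$ lie in the relative interiors of the sides on $a,b,c,d$ respectively (so $ABCD$ is a convex quadrilateral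 with vertices in this cyclic order). *)

theory Defs
  imports "HOL-Analysis.Analysis"
begin

(* A point of RP^2 is represented by a nonzero lift in real^3;
   a line is represented by a nonzero covector f in real^3 acting by f(x) = f \<bullet> x,
   the line being the projectivised kernel. *)

definition is_flag :: "real^3 \<Rightarrow> real^3 \<Rightarrow> bool" where
  "is_flag P l \<longleftrightarrow> P \<noteq> 0 \<and> l \<noteq> 0 \<and> l \<bullet> P = 0"

definition line_through :: "real^3 \<Rightarrow> real^3 \<Rightarrow> real^3" where
  "line_through P Q = cross3 P Q"

definition meet :: "real^3 \<Rightarrow> real^3 \<Rightarrow> real^3" where
  "meet l m = cross3 l m"

definition triple_ratio ::
  "real^3 \<Rightarrow> real^3 \<Rightarrow> real^3 \<Rightarrow> real^3 \<Rightarrow> real^3 \<Rightarrow> real^3 \<Rightarrow> real" where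
  "triple_ratio A a B b C c =
     ((a \<bullet> B) * (b \<bullet> C) * (c \<bullet> A)) / ((a \<bullet> C) * (b \<bullet> A) * (c \<bullet> B))"

(* Lines through the point Q form a projective line, namely the projectivisation of
   the 2-dimensional space of covectors annihilating Q.  On that space
   pencil_bracket Q is a nonzero alternating bilinear form (an "affine coordinate
   determinant"), so the cross-ratio below equals
   (x1-x2)(x3-x4)/((x1-x4)(x2-x3)) in any affine coordinate on the pencil. *)
definition pencil_bracket :: "real^3 \<Rightarrow> real^3 \<Rightarrow> real^3 \<Rightarrow> real" where
  "pencil_bracket Q f g = Q \<bullet> cross3 f g"

definition pencil_cross_ratio ::
  "real^3 \<Rightarrow> real^3 \<Rightarrow> real^3 \<Rightarrow> real^3 \<Rightarrow> real^3 \<Rightarrow> real" where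
  "pencil_cross_ratio Q l1 l2 l3 l4 =
     (pencil_bracket Q l1 l2 * pencil_bracket Q l3 l4) /
     (pencil_bracket Q l1 l4 * pencil_bracket Q l2 l3)"

definition generic_flags4 :: "((real^3) \<times> (real^3)) list \<Rightarrow> bool" where
  "generic_flags4 Fs \<longleftrightarrow> length Fs = 4 \<and>
     (\<forall>i<4. is_flag (fst (Fs!i)) (snd (Fs!i))) \<and>
     (\<forall>i<4. \<forall>j<4. i \<noteq> j \<longrightarrow> snd (Fs!j) \<bullet> fst (Fs!i) \<noteq> 0) \<and>
     (\<forall>i<4. \<forall>j<4. \<forall>k<4. i \<noteq> j \<and> j \<noteq> k \<and> i \<noteq> k \<longrightarrow>
        fst (Fs!i) \<bullet> cross3 (fst (Fs!j)) (fst (Fs!k)) \<noteq> 0 \<and>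
        snd (Fs!i) \<bullet> cross3 (snd (Fs!j)) (snd (Fs!k)) \<noteq> 0)"

(* The affine chart of RP^2 with line at infinity ker h is identified with the affine
   plane {x. h \<bullet> x = 1} in real^3; a point P not at infinity is sent to chart_pt h P. *)
definition chart_pt :: "real^3 \<Rightarrow> real^3 \<Rightarrow> real^3" where
  "chart_pt h P = (1 / (h \<bullet> P)) *\<^sub>R P"

definition convex_quadrilateral :: "real^3 \<Rightarrow> real^3 \<Rightarrow> real^3 \<Rightarrow> real^3 \<Rightarrow> bool" where
  "convex_quadrilateral W1 W2 W3 W4 \<longleftrightarrow>
     \<not> collinear {W1, W2, W3} \<and> open_segment W1 W3 \<inter> open_segment W2 W4 \<noteq> {}"

(* "The convex quadrangle ABCD is inscribed into the convex quadrangle abcd":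
   in some affine chart, the lines a,b,c,d bound a compact convex quadrilateral whose
   sides, in cyclic order, lie on a,b,c,d (vertices d\<inter>a, a\<inter>b, b\<inter>c, c\<inter>d), and
   A,B,C,D lie in the relative interiors of the sides on a,b,c,d respectively. *)
definition inscribed ::
  "real^3 \<Rightarrow> real^3 \<Rightarrow> real^3 \<Rightarrow> real^3 \<Rightarrow> real^3 \<Rightarrow> real^3 \<Rightarrow> real^3 \<Rightarrow> real^3 \<Rightarrow> bool" where
  "inscribed A B C D a b c d \<longleftrightarrow>
     (\<exists>h::real^3. h \<noteq> 0 \<and>
        (let V1 = meet d a; V2 = meet a b; V3 = meet b c; V4 = meet c d in
          V1 \<noteq> 0 \<and> V2 \<noteq> 0 \<and> V3 \<noteq> 0 \<and> V4 \<noteq> 0 \<and>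
          h \<bullet> V1 \<noteq> 0 \<and> h \<bullet> V2 \<noteq> 0 \<and> h \<bullet> V3 \<noteq> 0 \<and> h \<bullet> V4 \<noteq> 0 \<and>
          h \<bullet> A \<noteq> 0 \<and> h \<bullet> B \<noteq> 0 \<and> h \<bullet> C \<noteq> 0 \<and> h \<bullet> D \<noteq> 0 \<and>
          convex_quadrilateral (chart_pt h V1) (chart_pt h V2) (chart_pt h V3) (chart_pt h V4) \<and>
          chart_pt h A \<in> open_segment (chart_pt h V1) (chart_pt h V2) \<and>
          chart_pt h B \<in> open_segment (chart_pt h V2) (chart_pt h V3) \<and>
          chart_pt h C \<in> open_segment (chart_pt h V3) (chart_pt h V4) \<and>
          chart_pt h D \<in> open_segment (chart_pt h V4) (chart_pt h V1)))"

end

theory Submission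
  imports Defs
begin

unbundle cross3_syntax

text \<open>
  Let V1 = d \<times> a, V2 = a \<times> b, V3 = b \<times> c, V4 = c \<times> d be the vertices of the quadrilateral of
  lines abcd. A point on a line is a combination of the two vertices on it, e.g.
  [abd] A = (b \<bullet> A) V1 + (d \<bullet> A) V2. In the affine chart whose line at infinity is the kernel of h,
  A lies inside the side V1 V2 iff (b \<bullet> A)(h \<bullet> V1) and (d \<bullet> A)(h \<bullet> V2) have the same sign, and
  V1 V2 V3 V4 is convex iff the four oriented triangles on three of the vertices, each multiplied
  by h at the remaining vertex, have the same sign. Eliminating h, ABCD is inscribed into abcd iff
  four projectively invariant edge parameters uA, uB, uC, uD are positive. The invariants
  X, Y, Z, W are rational functions of these parameters which are all positive exactly when the
  parameters are.
\<close>

section \<open>Triple products\<close>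

lemma dot_cross_rotate: "x \<bullet> (y \<times> z) = y \<bullet> (z \<times> x)"
  by (simp add: cross3_simps)

lemma dot_cross_swap: "x \<bullet> (y \<times> z) = - (y \<bullet> (x \<times> z))"
  by (simp add: cross3_simps)

lemma cross_cross_common: "(x \<times> y) \<times> (x \<times> z) = (x \<bullet> (y \<times> z)) *\<^sub>R x"
  by (simp add: cross3_simps forall_3)

lemma dot_cross_expansion:
  "(x \<bullet> (y \<times> z)) *\<^sub>R w = (x \<bullet> w) *\<^sub>R (y \<times> z) + (y \<bullet> w) *\<^sub>R (z \<times> x) + (z \<bullet> w) *\<^sub>R (x \<times> y)"
  by (simp add: cross3_simps forall_3)

lemma incident_point_expansion:
  assumes "a \<bullet> P = 0"
  shows "(a \<bullet> (b \<times> d)) *\<^sub>R P = (b \<bullet> P) *\<^sub>R (d \<times> a) + (d \<bullet> P) *\<^sub>R (a \<times> b)"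
  using dot_cross_expansion[of a b d P] assms by simp

lemma four_vectors_dependence:
  "(w2 \<bullet> (w3 \<times> w4)) *\<^sub>R w1 + (w4 \<bullet> (w1 \<times> w2)) *\<^sub>R w3 =
   (w3 \<bullet> (w4 \<times> w1)) *\<^sub>R w2 + (w1 \<bullet> (w2 \<times> w3)) *\<^sub>R w4"
  by (simp add: cross3_simps forall_3)

lemma dot_cross_eq_0_if_collinear:
  assumes "collinear {x, y, z}"
  shows "x \<bullet> (y \<times> z) = 0"
proof -
  obtain u where "\<forall>v\<in>{x, y, z}. \<forall>w\<in>{x, y, z}. \<exists>c. v - w = c *\<^sub>R u"
    using assms unfolding collinear_def by blast
  then obtain c1 c2 where "y - x = c1 *\<^sub>R u" "z - x = c2 *\<^sub>R u"
    by blast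
  then have "y = x + c1 *\<^sub>R u" "z = x + c2 *\<^sub>R u"
    by (simp_all add: algebra_simps)
  then show ?thesis
    by (simp add: cross_add_left cross_add_right cross_mult_left cross_mult_right inner_add_right dot_cross_self)
qed

lemma coefficients_eq_if_cross_nonzero:
  assumes "u \<times> w \<noteq> 0" "\<alpha> *\<^sub>R u + \<beta> *\<^sub>R w = \<alpha>' *\<^sub>R u + \<beta>' *\<^sub>R w"
  shows "\<alpha> = \<alpha>'" "\<beta> = \<beta>'"
proof -
  have "\<alpha> *\<^sub>R (u \<times> w) = \<alpha>' *\<^sub>R (u \<times> w)"
    using arg_cong[OF assms(2), of "\<lambda>v. v \<times> w"] by (simp add: cross_add_left cross_mult_left)
  then show "\<alpha> = \<alpha>'"
    using assms(1) by simp
  have "\<beta> *\<^sub>R (u \<times> w) = \<beta>' *\<^sub>R (u \<times> w)"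
    using arg_cong[OF assms(2), of "\<lambda>v. u \<times> v"] by (simp add: cross_add_right cross_mult_right)
  then show "\<beta> = \<beta>'"
    using assms(1) by simp
qed

lemma pos_mult_trans: "0 < x * y \<Longrightarrow> 0 < y * z \<Longrightarrow> 0 < x * (z::real)"
  by (metis mult_pos_pos zero_less_mult_iff not_square_less_zero mult_less_0_iff)

lemma pos_mult_if_scaled_eq:
  fixes x y \<alpha> \<beta> :: real
  assumes "0 < \<alpha>" "0 < \<beta>" "\<alpha> * x = \<beta> * y" "x \<noteq> 0"
  shows "0 < x * y"
proof -
  have "\<beta> * (x * y) = \<alpha> * x\<^sup>2"
    using assms(3) by (simp add: power2_eq_square algebra_simps)
  also have "\<dots> > 0"
    using assms(1,4) by simp
  finally show ?thesis
    using assms(2) by (simp add: zero_less_mult_iff)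
qed

lemma add_nonzero_if_mult_pos: "0 < x * y \<Longrightarrow> x + y \<noteq> (0::real)"
  by (auto simp: zero_less_mult_iff)

lemma pos_of_pos_mult_square: "0 < x * z\<^sup>2 \<Longrightarrow> 0 < (x::real)"
  by (auto simp: zero_less_mult_iff)

lemma pos_divide_iff_pos_mult: "0 < x / y \<longleftrightarrow> 0 < x * (y::real)"
  by (simp add: zero_less_divide_iff zero_less_mult_iff)

lemma pos_invariants_iff_pos_parameters:
  fixes uA uB uC uD :: real
  shows "(0 < uB * uC * (1 + uA) / (1 + uC) \<and> 0 < uA * uD * (1 + uC) / (1 + uA) \<and>
          0 < uB * ((1 + uA) + uA * uD * (1 + uC)) / ((1 + uC) + uB * uC * (1 + uA)) \<and>
          0 < uD * ((1 + uC) + uB * uC * (1 + uA)) / ((1 + uA) + uA * uD * (1 + uC)))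
     \<longleftrightarrow> (0 < uA \<and> 0 < uB \<and> 0 < uC \<and> 0 < uD)"
  (is "?invariants \<longleftrightarrow> ?parameters")
proof
  assume ?parameters
  then show ?invariants
    by (simp add: add_pos_pos)
next
  define eA eC where "eA = 1 + uA" and "eC = 1 + uC"
  define ZA ZC where "ZA = eA + uA * uD * eC" and "ZC = eC + uB * uC * eA"
  assume ?invariants
  then have X: "0 < uB * uC * (eA * eC)" and Y: "0 < uA * uD * (eA * eC)"
    and Z: "0 < uB * (ZA * ZC)" and W: "0 < uD * (ZA * ZC)"
    unfolding eA_def eC_def ZA_def ZC_def
    by (simp_all add: zero_less_divide_iff zero_less_mult_iff[symmetric] ac_simps)
  have "ZA * eA = eA\<^sup>2 + uA * uD * (eA * eC)" "ZC * eC = eC\<^sup>2 + uB * uC * (eA * eC)"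
    unfolding ZA_def ZC_def by (simp_all add: power2_eq_square algebra_simps)
  then have "0 < ZA * eA" "0 < ZC * eC"
    using X Y by (simp_all add: add_nonneg_pos)
  \<comment> \<open>So ZA * ZC has the sign of eA * eC; combined with X, Z and with Y, W this gives uC, uA > 0.\<close>
  then have Q: "0 < (ZA * ZC) * (eA * eC)"
    by (metis mult_pos_pos mult.assoc mult.left_commute)
  have "0 < (uB * uC * (eA * eC)) * (uB * (ZA * ZC)) * ((ZA * ZC) * (eA * eC))"
    using X Z Q by simp
  also have "\<dots> = uC * (uB * eA * eC * ZA * ZC)\<^sup>2"
    by (simp add: power2_eq_square ac_simps)
  finally have "0 < uC"
    by (rule pos_of_pos_mult_square)
  have "0 < (uA * uD * (eA * eC)) * (uD * (ZA * ZC)) * ((ZA * ZC) * (eA * eC))"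
    using Y W Q by simp
  also have "\<dots> = uA * (uD * eA * eC * ZA * ZC)\<^sup>2"
    by (simp add: power2_eq_square ac_simps)
  finally have "0 < uA"
    by (rule pos_of_pos_mult_square)
  with \<open>0 < uC\<close> have "0 < eA * eC"
    unfolding eA_def eC_def by simp
  with Q have "0 < ZA * ZC"
    by (rule zero_less_mult_pos2)
  then show ?parameters
    using \<open>0 < uA\<close> \<open>0 < uC\<close> zero_less_mult_pos2[OF Z] zero_less_mult_pos2[OF W] by simp
qed

section \<open>Segments and convex quadrilaterals in an affine chart\<close>

lemma combination_in_open_segment:
  fixes u w :: "'a::real_vector"
  assumes "u \<noteq> w" "0 < x * y"
  shows "(1 / (x + y)) *\<^sub>R (x *\<^sub>R u + y *\<^sub>R w) \<in> open_segment u w"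
proof -
  from assms(2) have "0 < x \<and> 0 < y \<or> x < 0 \<and> y < 0"
    by (simp add: zero_less_mult_iff)
  then have "0 < x / (x + y)" "0 < y / (x + y)"
    by (auto simp: zero_less_divide_iff)
  moreover have "x / (x + y) = 1 - y / (x + y)"
    using \<open>0 < y / (x + y)\<close> by (auto simp: eq_diff_eq simp flip: add_divide_distrib)
  ultimately show ?thesis
    unfolding in_segment using assms(1)
    by (intro conjI exI[of _ "y / (x + y)"]) (auto simp: scaleR_add_right)
qed

lemma chart_pt_inner [simp]: "h \<bullet> P \<noteq> 0 \<Longrightarrow> h \<bullet> chart_pt h P = 1"
  by (simp add: chart_pt_def)

lemma cross_chart_pt: "chart_pt h x \<times> chart_pt h y = (1 / ((h \<bullet> x) * (h \<bullet> y))) *\<^sub>R (x \<times> y)"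
  by (simp add: chart_pt_def cross_mult_left cross_mult_right)

lemma dot_cross_chart_pt:
  "chart_pt h x \<bullet> (chart_pt h y \<times> chart_pt h z) = (x \<bullet> (y \<times> z)) / ((h \<bullet> x) * (h \<bullet> y) * (h \<bullet> z))"
  by (simp add: chart_pt_def cross_mult_left cross_mult_right)

lemma chart_pt_combination:
  assumes "\<sigma> *\<^sub>R P = x *\<^sub>R V + y *\<^sub>R W" "\<sigma> \<noteq> 0" "h \<bullet> P \<noteq> 0" "h \<bullet> V \<noteq> 0" "h \<bullet> W \<noteq> 0"
  shows "chart_pt h P = (1 / (\<sigma> * (h \<bullet> P))) *\<^sub>R
           ((x * (h \<bullet> V)) *\<^sub>R chart_pt h V + (y * (h \<bullet> W)) *\<^sub>R chart_pt h W)"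
proof -
  have "chart_pt h P = (1 / (\<sigma> * (h \<bullet> P))) *\<^sub>R (\<sigma> *\<^sub>R P)"
    using assms(2) by (simp add: chart_pt_def)
  then show ?thesis
    using assms(1,4,5) by (simp add: chart_pt_def)
qed

lemma chart_open_segment_iff:
  fixes P V W h :: "real^3"
  assumes P: "\<sigma> *\<^sub>R P = x *\<^sub>R V + y *\<^sub>R W"
    and nz: "\<sigma> \<noteq> 0" "h \<bullet> V \<noteq> 0" "h \<bullet> W \<noteq> 0" "V \<times> W \<noteq> 0"
  shows "h \<bullet> P \<noteq> 0 \<and> chart_pt h P \<in> open_segment (chart_pt h V) (chart_pt h W) \<longleftrightarrow>
         0 < x * (h \<bullet> V) * (y * (h \<bullet> W))"
proof -
  have hP: "\<sigma> * (h \<bullet> P) = x * (h \<bullet> V) + y * (h \<bullet> W)"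
    using arg_cong[OF P, of "inner h"] by (simp add: inner_add_right)
  have cross: "chart_pt h V \<times> chart_pt h W \<noteq> 0"
    using nz by (simp add: cross_chart_pt)
  show ?thesis
  proof
    assume "h \<bullet> P \<noteq> 0 \<and> chart_pt h P \<in> open_segment (chart_pt h V) (chart_pt h W)"
    then obtain t where t: "0 < t" "t < 1" "chart_pt h P = (1 - t) *\<^sub>R chart_pt h V + t *\<^sub>R chart_pt h W"
      and "h \<bullet> P \<noteq> 0"
      unfolding in_segment by blast
    then have "(x * (h \<bullet> V) / (\<sigma> * (h \<bullet> P))) *\<^sub>R chart_pt h V + (y * (h \<bullet> W) / (\<sigma> * (h \<bullet> P))) *\<^sub>R chart_pt h W
             = (1 - t) *\<^sub>R chart_pt h V + t *\<^sub>R chart_pt h W"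
      using chart_pt_combination[OF P nz(1) _ nz(2,3)] by (simp add: scaleR_add_right)
    note coeffs = coefficients_eq_if_cross_nonzero[OF cross this]
    have "x * (h \<bullet> V) = (1 - t) * (\<sigma> * (h \<bullet> P))"
      using coeffs(1) nz(1) \<open>h \<bullet> P \<noteq> 0\<close> by (simp add: divide_eq_eq)
    moreover have "y * (h \<bullet> W) = t * (\<sigma> * (h \<bullet> P))"
      using coeffs(2) nz(1) \<open>h \<bullet> P \<noteq> 0\<close> by (simp add: divide_eq_eq)
    ultimately have "x * (h \<bullet> V) * (y * (h \<bullet> W)) = ((1 - t) * t) * (\<sigma> * (h \<bullet> P))\<^sup>2"
      by (simp add: power2_eq_square)
    then show "0 < x * (h \<bullet> V) * (y * (h \<bullet> W))"
      using t nz(1) \<open>h \<bullet> P \<noteq> 0\<close> by simp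
  next
    assume pos: "0 < x * (h \<bullet> V) * (y * (h \<bullet> W))"
    then have "\<sigma> * (h \<bullet> P) \<noteq> 0"
      unfolding hP by (rule add_nonzero_if_mult_pos)
    then have "h \<bullet> P \<noteq> 0"
      by simp
    moreover have "chart_pt h V \<noteq> chart_pt h W"
      using cross by auto
    ultimately show "h \<bullet> P \<noteq> 0 \<and> chart_pt h P \<in> open_segment (chart_pt h V) (chart_pt h W)"
      using chart_pt_combination[OF P nz(1) _ nz(2,3)] combination_in_open_segment[OF _ pos]
      unfolding hP by simp
  qed
qed

lemma convex_quadrilateral_orientations:
  fixes w1 w2 w3 w4 :: "real^3"
  assumes "convex_quadrilateral w1 w2 w3 w4" "w1 \<bullet> (w2 \<times> w3) \<noteq> 0"
  shows "0 < (w1 \<bullet> (w2 \<times> w3)) * (w4 \<bullet> (w1 \<times> w2))"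
    "0 < (w4 \<bullet> (w1 \<times> w2)) * (w2 \<bullet> (w3 \<times> w4))"
    "0 < (w1 \<bullet> (w2 \<times> w3)) * (w3 \<bullet> (w4 \<times> w1))"
proof -
  obtain m where m: "m \<in> open_segment w1 w3" "m \<in> open_segment w2 w4"
    using assms(1) unfolding convex_quadrilateral_def by blast
  obtain \<sigma> where "0 < \<sigma>" "\<sigma> < 1" "m = (1 - \<sigma>) *\<^sub>R w1 + \<sigma> *\<^sub>R w3"
    using m(1) unfolding in_segment by blast
  moreover obtain \<mu> where "0 < \<mu>" "\<mu> < 1" "m = (1 - \<mu>) *\<^sub>R w2 + \<mu> *\<^sub>R w4"
    using m(2) unfolding in_segment by blast
  ultimately have diagonals: "(1 - \<sigma>) *\<^sub>R w1 + \<sigma> *\<^sub>R w3 = (1 - \<mu>) *\<^sub>R w2 + \<mu> *\<^sub>R w4"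
    by simp
  have "\<sigma> * (w1 \<bullet> (w2 \<times> w3)) = \<mu> * (w4 \<bullet> (w1 \<times> w2))"
    using arg_cong[OF diagonals, of "\<lambda>v. v \<bullet> (w1 \<times> w2)"] dot_cross_rotate[of w3 w1 w2]
    by (simp add: inner_add_left dot_cross_self)
  then show P1: "0 < (w1 \<bullet> (w2 \<times> w3)) * (w4 \<bullet> (w1 \<times> w2))"
    using pos_mult_if_scaled_eq \<open>0 < \<sigma>\<close> \<open>0 < \<mu>\<close> assms(2) by blast
  have "(1 - \<sigma>) * (w4 \<bullet> (w1 \<times> w2)) = \<sigma> * (w2 \<bullet> (w3 \<times> w4))"
    using arg_cong[OF diagonals, of "\<lambda>v. v \<bullet> (w2 \<times> w4)"]
      dot_cross_rotate[of w4 w1 w2, symmetric] dot_cross_swap[of w3 w2 w4]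
    by (simp add: inner_add_left dot_cross_self)
  then show "0 < (w4 \<bullet> (w1 \<times> w2)) * (w2 \<bullet> (w3 \<times> w4))"
    by (rule pos_mult_if_scaled_eq[rotated 2]) (use \<open>\<sigma> < 1\<close> \<open>0 < \<sigma>\<close> P1 in auto)
  have "(1 - \<mu>) * (w1 \<bullet> (w2 \<times> w3)) = \<mu> * (w3 \<bullet> (w4 \<times> w1))"
    using arg_cong[OF diagonals, of "\<lambda>v. v \<bullet> (w1 \<times> w3)"]
      dot_cross_swap[of w2 w1 w3] dot_cross_rotate[of w3 w4 w1, symmetric]
    by (simp add: dot_cross_self algebra_simps)
  then show "0 < (w1 \<bullet> (w2 \<times> w3)) * (w3 \<bullet> (w4 \<times> w1))"
    by (rule pos_mult_if_scaled_eq[rotated 2]) (use \<open>\<mu> < 1\<close> \<open>0 < \<mu>\<close> assms(2) in auto)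
qed

lemma convex_quadrilateral_if_orientations:
  fixes w1 w2 w3 w4 h :: "real^3"
  assumes h: "h \<bullet> w1 = 1" "h \<bullet> w2 = 1" "h \<bullet> w3 = 1" "h \<bullet> w4 = 1"
    and pos: "0 < (w1 \<bullet> (w2 \<times> w3)) * (w2 \<bullet> (w3 \<times> w4))"
      "0 < (w1 \<bullet> (w2 \<times> w3)) * (w3 \<bullet> (w4 \<times> w1))"
      "0 < (w1 \<bullet> (w2 \<times> w3)) * (w4 \<bullet> (w1 \<times> w2))"
  shows "convex_quadrilateral w1 w2 w3 w4"
proof -
  define D123 D234 D341 D412
    where "D123 = w1 \<bullet> (w2 \<times> w3)" and "D234 = w2 \<bullet> (w3 \<times> w4)"
      and "D341 = w3 \<bullet> (w4 \<times> w1)" and "D412 = w4 \<bullet> (w1 \<times> w2)"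
  have dep: "D234 *\<^sub>R w1 + D412 *\<^sub>R w3 = D341 *\<^sub>R w2 + D123 *\<^sub>R w4"
    unfolding D123_def D234_def D341_def D412_def by (rule four_vectors_dependence)
  have sums: "D234 + D412 = D341 + D123"
    using arg_cong[OF dep, of "inner h"] h by (simp add: inner_add_right)
  have "w1 \<noteq> w3" "w2 \<noteq> w4"
    using pos by (auto simp: dot_cross_self)
  moreover have "0 < D234 * D412" "0 < D341 * D123"
    using pos pos_mult_trans[of D234 D123 D412] unfolding D123_def D234_def D341_def D412_def
    by (simp_all add: mult.commute)
  ultimately have "(1 / (D234 + D412)) *\<^sub>R (D234 *\<^sub>R w1 + D412 *\<^sub>R w3) \<in> open_segment w1 w3"
    and "(1 / (D341 + D123)) *\<^sub>R (D341 *\<^sub>R w2 + D123 *\<^sub>R w4) \<in> open_segment w2 w4"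
    by (simp_all add: combination_in_open_segment)
  then have "(1 / (D234 + D412)) *\<^sub>R (D234 *\<^sub>R w1 + D412 *\<^sub>R w3) \<in> open_segment w1 w3 \<inter> open_segment w2 w4"
    unfolding sums dep by blast
  moreover have "\<not> collinear {w1, w2, w3}"
    using dot_cross_eq_0_if_collinear pos(1) by force
  ultimately show ?thesis
    unfolding convex_quadrilateral_def by blast
qed

lemma convex_quadrilateral_iff_orientations:
  fixes w1 w2 w3 w4 h :: "real^3"
  assumes "h \<bullet> w1 = 1" "h \<bullet> w2 = 1" "h \<bullet> w3 = 1" "h \<bullet> w4 = 1" "w1 \<bullet> (w2 \<times> w3) \<noteq> 0"
  shows "convex_quadrilateral w1 w2 w3 w4 \<longleftrightarrow>
    0 < (w1 \<bullet> (w2 \<times> w3)) * (w2 \<bullet> (w3 \<times> w4)) \<and>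
    0 < (w1 \<bullet> (w2 \<times> w3)) * (w3 \<bullet> (w4 \<times> w1)) \<and>
    0 < (w1 \<bullet> (w2 \<times> w3)) * (w4 \<bullet> (w1 \<times> w2))"
  using convex_quadrilateral_orientations[OF _ assms(5)] pos_mult_trans
    convex_quadrilateral_if_orientations[OF assms(1-4)] by meson

lemma convex_quadrilateral_chart_iff:
  fixes h V1 V2 V3 V4 :: "real^3"
  assumes nz: "h \<bullet> V1 \<noteq> 0" "h \<bullet> V2 \<noteq> 0" "h \<bullet> V3 \<noteq> 0" "h \<bullet> V4 \<noteq> 0" "V1 \<bullet> (V2 \<times> V3) \<noteq> 0"
  shows "convex_quadrilateral (chart_pt h V1) (chart_pt h V2) (chart_pt h V3) (chart_pt h V4) \<longleftrightarrow>
    0 < (V1 \<bullet> (V2 \<times> V3)) * (V2 \<bullet> (V3 \<times> V4)) * ((h \<bullet> V1) * (h \<bullet> V4)) \<and>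
    0 < (V1 \<bullet> (V2 \<times> V3)) * (V3 \<bullet> (V4 \<times> V1)) * ((h \<bullet> V2) * (h \<bullet> V4)) \<and>
    0 < (V1 \<bullet> (V2 \<times> V3)) * (V4 \<bullet> (V1 \<times> V2)) * ((h \<bullet> V3) * (h \<bullet> V4))"
proof -
  define H where "H = (h \<bullet> V1) * (h \<bullet> V2) * (h \<bullet> V3) * (h \<bullet> V4)"
  have "H \<noteq> 0"
    using nz unfolding H_def by simp
  have "convex_quadrilateral (chart_pt h V1) (chart_pt h V2) (chart_pt h V3) (chart_pt h V4) \<longleftrightarrow>
    0 < (V1 \<bullet> (V2 \<times> V3)) * (V2 \<bullet> (V3 \<times> V4)) * ((h \<bullet> V1) * (h \<bullet> V4)) / H\<^sup>2 \<and>
    0 < (V1 \<bullet> (V2 \<times> V3)) * (V3 \<bullet> (V4 \<times> V1)) * ((h \<bullet> V2) * (h \<bullet> V4)) / H\<^sup>2 \<and>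
    0 < (V1 \<bullet> (V2 \<times> V3)) * (V4 \<bullet> (V1 \<times> V2)) * ((h \<bullet> V3) * (h \<bullet> V4)) / H\<^sup>2"
    using convex_quadrilateral_iff_orientations[of h] nz
    by (simp add: dot_cross_chart_pt H_def power2_eq_square field_simps)
  then show ?thesis
    using \<open>H \<noteq> 0\<close> by (simp add: zero_less_divide_iff)
qed

section \<open>Cross-ratios in a pencil\<close>

lemma pencil_bracket_flag_line: "a \<bullet> P = 0 \<Longrightarrow> pencil_bracket P a (line_through P Q) = (P \<bullet> P) * (a \<bullet> Q)"
  unfolding pencil_bracket_def line_through_def by (simp add: Lagrange inner_diff_right)

lemma pencil_bracket_lines: "pencil_bracket P (line_through P Q) (line_through P R) = (P \<bullet> P) * (P \<bullet> (Q \<times> R))"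
  unfolding pencil_bracket_def line_through_def by (simp add: cross_cross_common)

lemma pencil_cross_ratio_flag:
  assumes "a \<bullet> P = 0" "P \<noteq> 0"
  shows "pencil_cross_ratio P a (line_through P Q) (line_through P R) (line_through P S) =
    (a \<bullet> Q) * (P \<bullet> (R \<times> S)) / ((a \<bullet> S) * (P \<bullet> (Q \<times> R)))"
  using assms by (simp add: pencil_cross_ratio_def pencil_bracket_flag_line pencil_bracket_lines)

section \<open>Four flags in generic position\<close>

locale generic_four_flags =
  fixes A B C D a b c d :: "real^3"
  assumes generic: "generic_flags4 [(A, a), (B, b), (C, c), (D, d)]"
begin

abbreviation "abc \<equiv> a \<bullet> (b \<times> c)"
abbreviation "abd \<equiv> a \<bullet> (b \<times> d)"
abbreviation "acd \<equiv> a \<bullet> (c \<times> d)"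
abbreviation "bcd \<equiv> b \<bullet> (c \<times> d)"

lemma
  shows flags: "is_flag A a" "is_flag B b" "is_flag C c" "is_flag D d"
    and points_off_lines: "b \<bullet> A \<noteq> 0" "c \<bullet> A \<noteq> 0" "d \<bullet> A \<noteq> 0" "a \<bullet> B \<noteq> 0" "c \<bullet> B \<noteq> 0"
      "a \<bullet> C \<noteq> 0" "b \<bullet> C \<noteq> 0" "d \<bullet> C \<noteq> 0" "a \<bullet> D \<noteq> 0" "c \<bullet> D \<noteq> 0"
    and points_noncollinear: "A \<bullet> (B \<times> C) \<noteq> 0" "A \<bullet> (C \<times> D) \<noteq> 0"
    and lines_nonconcurrent: "abc \<noteq> 0" "abd \<noteq> 0" "acd \<noteq> 0" "bcd \<noteq> 0"
  using generic unfolding generic_flags4_def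
  by (simp_all add: less_Suc_eq numeral_eq_Suc all_conj_distrib)

lemma points_on_sides:
  "abd *\<^sub>R A = (b \<bullet> A) *\<^sub>R (d \<times> a) + (d \<bullet> A) *\<^sub>R (a \<times> b)"
  "abc *\<^sub>R B = (c \<bullet> B) *\<^sub>R (a \<times> b) + (a \<bullet> B) *\<^sub>R (b \<times> c)"
  "bcd *\<^sub>R C = (d \<bullet> C) *\<^sub>R (b \<times> c) + (b \<bullet> C) *\<^sub>R (c \<times> d)"
  "acd *\<^sub>R D = (a \<bullet> D) *\<^sub>R (c \<times> d) + (c \<bullet> D) *\<^sub>R (d \<times> a)"
proof -
  show "abd *\<^sub>R A = (b \<bullet> A) *\<^sub>R (d \<times> a) + (d \<bullet> A) *\<^sub>R (a \<times> b)"
    using incident_point_expansion[of a A b d] flags(1) by (simp add: is_flag_def)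
  show "abc *\<^sub>R B = (c \<bullet> B) *\<^sub>R (a \<times> b) + (a \<bullet> B) *\<^sub>R (b \<times> c)"
    using incident_point_expansion[of b B c a] flags(2) by (simp add: is_flag_def dot_cross_rotate[of a b c])
  show "bcd *\<^sub>R C = (d \<bullet> C) *\<^sub>R (b \<times> c) + (b \<bullet> C) *\<^sub>R (c \<times> d)"
    using incident_point_expansion[of c C d b] flags(3) by (simp add: is_flag_def dot_cross_rotate[of b c d])
  show "acd *\<^sub>R D = (a \<bullet> D) *\<^sub>R (c \<times> d) + (c \<bullet> D) *\<^sub>R (d \<times> a)"
    using incident_point_expansion[of d D a c] flags(4)
    by (simp add: is_flag_def dot_cross_rotate[of a c d] dot_cross_rotate[of c d a])
qed

lemma adjacent_vertices_cross:
  "(d \<times> a) \<times> (a \<times> b) = abd *\<^sub>R a" "(a \<times> b) \<times> (b \<times> c) = abc *\<^sub>R b"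
  "(b \<times> c) \<times> (c \<times> d) = bcd *\<^sub>R c" "(c \<times> d) \<times> (d \<times> a) = acd *\<^sub>R d"
  by (simp_all add: cross3_simps forall_3)

lemma adjacent_vertices_cross_nonzero:
  "(d \<times> a) \<times> (a \<times> b) \<noteq> 0" "(a \<times> b) \<times> (b \<times> c) \<noteq> 0"
  "(b \<times> c) \<times> (c \<times> d) \<noteq> 0" "(c \<times> d) \<times> (d \<times> a) \<noteq> 0"
  using flags lines_nonconcurrent by (simp_all add: adjacent_vertices_cross is_flag_def)

lemma vertex_orientations:
  "(d \<times> a) \<bullet> ((a \<times> b) \<times> (b \<times> c)) = abd * abc"
  "(a \<times> b) \<bullet> ((b \<times> c) \<times> (c \<times> d)) = abc * bcd"
  "(b \<times> c) \<bullet> ((c \<times> d) \<times> (d \<times> a)) = bcd * acd"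
  "(c \<times> d) \<bullet> ((d \<times> a) \<times> (a \<times> b)) = abd * acd"
  "(d \<times> a) \<bullet> ((a \<times> b) \<times> (c \<times> d)) = abd * acd"
  "(d \<times> a) \<bullet> ((b \<times> c) \<times> (c \<times> d)) = bcd * acd"
  "(a \<times> b) \<bullet> ((b \<times> c) \<times> (d \<times> a)) = abd * abc"
  "(a \<times> b) \<bullet> ((c \<times> d) \<times> (d \<times> a)) = abd * acd"
  by (simp_all add: cross3_simps)

text \<open>The arguments h1, ..., h4 stand for the values h \<bullet> (d \<times> a), ..., h \<bullet> (c \<times> d) of the
  form h defining the line at infinity of a chart.\<close>

definition chart_signs :: "real \<Rightarrow> real \<Rightarrow> real \<Rightarrow> real \<Rightarrow> bool" where
  "chart_signs h1 h2 h3 h4 \<longleftrightarrow> h1 \<noteq> 0 \<and> h2 \<noteq> 0 \<and> h3 \<noteq> 0 \<and> h4 \<noteq> 0 \<and>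
     0 < (b \<bullet> A) * h1 * ((d \<bullet> A) * h2) \<and> 0 < (c \<bullet> B) * h2 * ((a \<bullet> B) * h3) \<and>
     0 < (d \<bullet> C) * h3 * ((b \<bullet> C) * h4) \<and> 0 < (a \<bullet> D) * h4 * ((c \<bullet> D) * h1) \<and>
     0 < abd * abc * (abc * bcd) * (h1 * h4) \<and> 0 < abd * abc * (bcd * acd) * (h2 * h4) \<and>
     0 < abd * abc * (abd * acd) * (h3 * h4)"

lemma chart_sides_iff:
  assumes hV: "h \<bullet> (d \<times> a) \<noteq> 0" "h \<bullet> (a \<times> b) \<noteq> 0" "h \<bullet> (b \<times> c) \<noteq> 0" "h \<bullet> (c \<times> d) \<noteq> 0"
  shows "h \<bullet> A \<noteq> 0 \<and> chart_pt h A \<in> open_segment (chart_pt h (d \<times> a)) (chart_pt h (a \<times> b)) \<longleftrightarrow>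
      0 < (b \<bullet> A) * (h \<bullet> (d \<times> a)) * ((d \<bullet> A) * (h \<bullet> (a \<times> b)))"
    and "h \<bullet> B \<noteq> 0 \<and> chart_pt h B \<in> open_segment (chart_pt h (a \<times> b)) (chart_pt h (b \<times> c)) \<longleftrightarrow>
      0 < (c \<bullet> B) * (h \<bullet> (a \<times> b)) * ((a \<bullet> B) * (h \<bullet> (b \<times> c)))"
    and "h \<bullet> C \<noteq> 0 \<and> chart_pt h C \<in> open_segment (chart_pt h (b \<times> c)) (chart_pt h (c \<times> d)) \<longleftrightarrow>
      0 < (d \<bullet> C) * (h \<bullet> (b \<times> c)) * ((b \<bullet> C) * (h \<bullet> (c \<times> d)))"
    and "h \<bullet> D \<noteq> 0 \<and> chart_pt h D \<in> open_segment (chart_pt h (c \<times> d)) (chart_pt h (d \<times> a)) \<longleftrightarrow>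
      0 < (a \<bullet> D) * (h \<bullet> (c \<times> d)) * ((c \<bullet> D) * (h \<bullet> (d \<times> a)))"
  using chart_open_segment_iff[OF points_on_sides(1) lines_nonconcurrent(2) hV(1,2) adjacent_vertices_cross_nonzero(1)]
    chart_open_segment_iff[OF points_on_sides(2) lines_nonconcurrent(1) hV(2,3) adjacent_vertices_cross_nonzero(2)]
    chart_open_segment_iff[OF points_on_sides(3) lines_nonconcurrent(4) hV(3,4) adjacent_vertices_cross_nonzero(3)]
    chart_open_segment_iff[OF points_on_sides(4) lines_nonconcurrent(3) hV(4,1) adjacent_vertices_cross_nonzero(4)]
  by blast+

lemma chart_convex_iff:
  assumes "h \<bullet> (d \<times> a) \<noteq> 0" "h \<bullet> (a \<times> b) \<noteq> 0" "h \<bullet> (b \<times> c) \<noteq> 0" "h \<bullet> (c \<times> d) \<noteq> 0"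
  shows "convex_quadrilateral (chart_pt h (d \<times> a)) (chart_pt h (a \<times> b)) (chart_pt h (b \<times> c)) (chart_pt h (c \<times> d)) \<longleftrightarrow>
    0 < abd * abc * (abc * bcd) * ((h \<bullet> (d \<times> a)) * (h \<bullet> (c \<times> d))) \<and>
    0 < abd * abc * (bcd * acd) * ((h \<bullet> (a \<times> b)) * (h \<bullet> (c \<times> d))) \<and>
    0 < abd * abc * (abd * acd) * ((h \<bullet> (b \<times> c)) * (h \<bullet> (c \<times> d)))"
  using convex_quadrilateral_chart_iff[OF assms] vertex_orientations lines_nonconcurrent by simp

lemma inscribed_iff_chart_signs:
  "inscribed A B C D a b c d \<longleftrightarrow> (\<exists>h. chart_signs (h \<bullet> (d \<times> a)) (h \<bullet> (a \<times> b)) (h \<bullet> (b \<times> c)) (h \<bullet> (c \<times> d)))"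
proof
  assume "inscribed A B C D a b c d"
  then obtain h where hV: "h \<bullet> (d \<times> a) \<noteq> 0" "h \<bullet> (a \<times> b) \<noteq> 0" "h \<bullet> (b \<times> c) \<noteq> 0" "h \<bullet> (c \<times> d) \<noteq> 0"
    and "h \<bullet> A \<noteq> 0" "h \<bullet> B \<noteq> 0" "h \<bullet> C \<noteq> 0" "h \<bullet> D \<noteq> 0"
    and "convex_quadrilateral (chart_pt h (d \<times> a)) (chart_pt h (a \<times> b)) (chart_pt h (b \<times> c)) (chart_pt h (c \<times> d))"
    and "chart_pt h A \<in> open_segment (chart_pt h (d \<times> a)) (chart_pt h (a \<times> b))"
      "chart_pt h B \<in> open_segment (chart_pt h (a \<times> b)) (chart_pt h (b \<times> c))"
      "chart_pt h C \<in> open_segment (chart_pt h (b \<times> c)) (chart_pt h (c \<times> d))"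
      "chart_pt h D \<in> open_segment (chart_pt h (c \<times> d)) (chart_pt h (d \<times> a))"
    unfolding inscribed_def meet_def Let_def by blast
  then show "\<exists>h. chart_signs (h \<bullet> (d \<times> a)) (h \<bullet> (a \<times> b)) (h \<bullet> (b \<times> c)) (h \<bullet> (c \<times> d))"
    using chart_sides_iff[OF hV] chart_convex_iff[OF hV] unfolding chart_signs_def by blast
next
  assume "\<exists>h. chart_signs (h \<bullet> (d \<times> a)) (h \<bullet> (a \<times> b)) (h \<bullet> (b \<times> c)) (h \<bullet> (c \<times> d))"
  then obtain h where signs: "chart_signs (h \<bullet> (d \<times> a)) (h \<bullet> (a \<times> b)) (h \<bullet> (b \<times> c)) (h \<bullet> (c \<times> d))" ..
  then have hV: "h \<bullet> (d \<times> a) \<noteq> 0" "h \<bullet> (a \<times> b) \<noteq> 0" "h \<bullet> (b \<times> c) \<noteq> 0" "h \<bullet> (c \<times> d) \<noteq> 0"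
    unfolding chart_signs_def by blast+
  then have "h \<noteq> 0" "d \<times> a \<noteq> 0" "a \<times> b \<noteq> 0" "b \<times> c \<noteq> 0" "c \<times> d \<noteq> 0"
    by auto
  then show "inscribed A B C D a b c d"
    using signs hV chart_sides_iff[OF hV] chart_convex_iff[OF hV]
    unfolding inscribed_def meet_def Let_def chart_signs_def by blast
qed

lemma triple_product_ACD:
  "abd * bcd * acd * (A \<bullet> (C \<times> D)) =
     (b \<bullet> A) * (d \<bullet> C) * (a \<bullet> D) * bcd * acd + (d \<bullet> A) * (d \<bullet> C) * (a \<bullet> D) * abc * bcd
   + (d \<bullet> A) * (d \<bullet> C) * (c \<bullet> D) * abd * abc + (d \<bullet> A) * (b \<bullet> C) * (c \<bullet> D) * abd * acd"
  (is "_ = ?expansion")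
proof -
  have "abd * bcd * acd * (A \<bullet> (C \<times> D)) = (abd *\<^sub>R A) \<bullet> ((bcd *\<^sub>R C) \<times> (acd *\<^sub>R D))"
    by (simp add: cross_mult_left cross_mult_right)
  also have "\<dots> = ((b \<bullet> A) *\<^sub>R (d \<times> a) + (d \<bullet> A) *\<^sub>R (a \<times> b)) \<bullet>
      (((d \<bullet> C) *\<^sub>R (b \<times> c) + (b \<bullet> C) *\<^sub>R (c \<times> d)) \<times> ((a \<bullet> D) *\<^sub>R (c \<times> d) + (c \<bullet> D) *\<^sub>R (d \<times> a)))"
    by (simp only: points_on_sides)
  also have "\<dots> = ?expansion"
    by (simp add: cross_add_left cross_add_right cross_mult_left cross_mult_right
        dot_cross_self vertex_orientations algebra_simps)
  finally show ?thesis .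
qed

lemma triple_product_ABC:
  "abd * abc * bcd * (A \<bullet> (B \<times> C)) =
     (b \<bullet> A) * (c \<bullet> B) * (d \<bullet> C) * abd * abc + (b \<bullet> A) * (c \<bullet> B) * (b \<bullet> C) * abd * acd
   + (b \<bullet> A) * (a \<bullet> B) * (b \<bullet> C) * bcd * acd + (d \<bullet> A) * (a \<bullet> B) * (b \<bullet> C) * abc * bcd"
  (is "_ = ?expansion")
proof -
  have "abd * abc * bcd * (A \<bullet> (B \<times> C)) = (abd *\<^sub>R A) \<bullet> ((abc *\<^sub>R B) \<times> (bcd *\<^sub>R C))"
    by (simp add: cross_mult_left cross_mult_right)
  also have "\<dots> = ((b \<bullet> A) *\<^sub>R (d \<times> a) + (d \<bullet> A) *\<^sub>R (a \<times> b)) \<bullet>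
      (((c \<bullet> B) *\<^sub>R (a \<times> b) + (a \<bullet> B) *\<^sub>R (b \<times> c)) \<times> ((d \<bullet> C) *\<^sub>R (b \<times> c) + (b \<bullet> C) *\<^sub>R (c \<times> d)))"
    by (simp only: points_on_sides)
  also have "\<dots> = ?expansion"
    by (simp add: cross_add_left cross_add_right cross_mult_left cross_mult_right
        dot_cross_self vertex_orientations algebra_simps)
  finally show ?thesis .
qed

text \<open>uA is the ratio in which A divides the side from d \<times> a to a \<times> b in the chart used in the
  proof of inscribed_iff_parameters_pos; similarly for uB, uC, uD.\<close>

definition "uA = (d \<bullet> A) * abc / ((b \<bullet> A) * acd)"
definition "uB = (a \<bullet> B) * bcd / ((c \<bullet> B) * abd)"
definition "uC = (b \<bullet> C) * acd / ((d \<bullet> C) * abc)"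
definition "uD = (c \<bullet> D) * abd / ((a \<bullet> D) * bcd)"

lemma one_plus_uA: "1 + uA = abd * (c \<bullet> A) / ((b \<bullet> A) * acd)"
proof -
  have "abd * (c \<bullet> A) = (b \<bullet> A) * acd + (d \<bullet> A) * abc"
    using arg_cong[OF points_on_sides(1), of "inner c"]
    by (simp add: inner_add_right dot_cross_rotate[of a c d, symmetric] dot_cross_rotate[of c a b])
  then show ?thesis
    using points_off_lines lines_nonconcurrent unfolding uA_def by (simp add: field_simps)
qed

lemma one_plus_uC: "1 + uC = bcd * (a \<bullet> C) / ((d \<bullet> C) * abc)"
proof -
  have "bcd * (a \<bullet> C) = (d \<bullet> C) * abc + (b \<bullet> C) * acd"
    using arg_cong[OF points_on_sides(3), of "inner a"] by (simp add: inner_add_right)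
  then show ?thesis
    using points_off_lines lines_nonconcurrent unfolding uC_def by (simp add: field_simps)
qed

lemma triple_ratio_ABC: "triple_ratio A a B b C c = uB * uC * (1 + uA) / (1 + uC)"
  unfolding one_plus_uA one_plus_uC unfolding triple_ratio_def uB_def uC_def
  using points_off_lines lines_nonconcurrent by (simp add: field_simps)

lemma triple_ratio_ACD: "triple_ratio A a C c D d = uA * uD * (1 + uC) / (1 + uA)"
  unfolding one_plus_uA one_plus_uC unfolding triple_ratio_def uA_def uD_def
  using points_off_lines lines_nonconcurrent by (simp add: field_simps)

lemma triple_product_ACD_in_parameters: "(1 + uA) + uA * uD * (1 + uC) = abd * (A \<bullet> (C \<times> D)) / ((b \<bullet> A) * (d \<bullet> C) * (a \<bullet> D))"
  using triple_product_ACD points_off_lines lines_nonconcurrent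
  unfolding uA_def uC_def uD_def by (simp add: field_simps)

lemma triple_product_ABC_in_parameters: "(1 + uC) + uB * uC * (1 + uA) = bcd * (A \<bullet> (B \<times> C)) / ((b \<bullet> A) * (c \<bullet> B) * (d \<bullet> C))"
proof -
  have expansion: "A \<bullet> (B \<times> C) = ((b \<bullet> A) * (c \<bullet> B) * (d \<bullet> C) * abd * abc + (b \<bullet> A) * (c \<bullet> B) * (b \<bullet> C) * abd * acd
   + (b \<bullet> A) * (a \<bullet> B) * (b \<bullet> C) * bcd * acd + (d \<bullet> A) * (a \<bullet> B) * (b \<bullet> C) * abc * bcd) / (abd * abc * bcd)"
    using triple_product_ABC lines_nonconcurrent by (simp add: eq_divide_eq ac_simps)
  show ?thesis
    unfolding expansion uA_def uB_def uC_def
    using points_off_lines lines_nonconcurrent by (simp add: field_simps)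
qed

lemma cross_ratio_at_A:
  "pencil_cross_ratio A a (line_through A B) (line_through A C) (line_through A D) =
   uB * ((1 + uA) + uA * uD * (1 + uC)) / ((1 + uC) + uB * uC * (1 + uA))"
  unfolding triple_product_ACD_in_parameters triple_product_ABC_in_parameters
  using pencil_cross_ratio_flag flags(1) points_off_lines lines_nonconcurrent points_noncollinear
  by (simp add: is_flag_def uB_def field_simps)

lemma cross_ratio_at_C:
  "pencil_cross_ratio C c (line_through C D) (line_through C A) (line_through C B) =
   uD * ((1 + uC) + uB * uC * (1 + uA)) / ((1 + uA) + uA * uD * (1 + uC))"
  unfolding triple_product_ACD_in_parameters triple_product_ABC_in_parameters
  using pencil_cross_ratio_flag flags(3) points_off_lines lines_nonconcurrent points_noncollinear
  by (simp add: is_flag_def uD_def field_simps dot_cross_rotate[of C A B] dot_cross_rotate[of A C D])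

lemma parameters_pos_iff:
  "0 < uA \<longleftrightarrow> 0 < (b \<bullet> A) * acd * ((d \<bullet> A) * abc)"
  "0 < uB \<longleftrightarrow> 0 < (c \<bullet> B) * abd * ((a \<bullet> B) * bcd)"
  "0 < uC \<longleftrightarrow> 0 < (d \<bullet> C) * abc * ((b \<bullet> C) * acd)"
  "0 < uD \<longleftrightarrow> 0 < (a \<bullet> D) * bcd * ((c \<bullet> D) * abd)"
  unfolding uA_def uB_def uC_def uD_def pos_divide_iff_pos_mult by (simp_all add: ac_simps)

lemma chart_signs_imp_parameters_pos:
  assumes "chart_signs h1 h2 h3 h4"
  shows "0 < uA" "0 < uB" "0 < uC" "0 < uD"
proof -
  txt \<open>Each parameter times a square is a product of side and convexity conditions.\<close>
  have sides: "0 < (b \<bullet> A) * h1 * ((d \<bullet> A) * h2)" "0 < (c \<bullet> B) * h2 * ((a \<bullet> B) * h3)"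
      "0 < (d \<bullet> C) * h3 * ((b \<bullet> C) * h4)" "0 < (a \<bullet> D) * h4 * ((c \<bullet> D) * h1)"
    and convex: "0 < abd * abc * (abc * bcd) * (h1 * h4)" "0 < abd * abc * (bcd * acd) * (h2 * h4)"
      "0 < abd * abc * (abd * acd) * (h3 * h4)"
    using assms unfolding chart_signs_def by blast+
  have "0 < (b \<bullet> A) * h1 * ((d \<bullet> A) * h2) * (abd * abc * (abc * bcd) * (h1 * h4)) * (abd * abc * (bcd * acd) * (h2 * h4))"
    using sides convex by simp
  also have "\<dots> = (b \<bullet> A) * acd * ((d \<bullet> A) * abc) * (abd * abc * bcd * h1 * h2 * h4)\<^sup>2"
    by (simp add: power2_eq_square ac_simps)
  finally show "0 < uA"
    unfolding parameters_pos_iff by (rule pos_of_pos_mult_square)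
  have "0 < (c \<bullet> B) * h2 * ((a \<bullet> B) * h3) * (abd * abc * (bcd * acd) * (h2 * h4)) * (abd * abc * (abd * acd) * (h3 * h4))"
    using sides convex by simp
  also have "\<dots> = (c \<bullet> B) * abd * ((a \<bullet> B) * bcd) * (abd * abc * acd * h2 * h3 * h4)\<^sup>2"
    by (simp add: power2_eq_square ac_simps)
  finally show "0 < uB"
    unfolding parameters_pos_iff by (rule pos_of_pos_mult_square)
  have "0 < (d \<bullet> C) * h3 * ((b \<bullet> C) * h4) * (abd * abc * (abd * acd) * (h3 * h4))"
    using sides convex by simp
  also have "\<dots> = (d \<bullet> C) * abc * ((b \<bullet> C) * acd) * (abd * h3 * h4)\<^sup>2"
    by (simp add: power2_eq_square ac_simps)
  finally show "0 < uC"
    unfolding parameters_pos_iff by (rule pos_of_pos_mult_square)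
  have "0 < (a \<bullet> D) * h4 * ((c \<bullet> D) * h1) * (abd * abc * (abc * bcd) * (h1 * h4))"
    using sides convex by simp
  also have "\<dots> = (a \<bullet> D) * bcd * ((c \<bullet> D) * abd) * (abc * h1 * h4)\<^sup>2"
    by (simp add: power2_eq_square ac_simps)
  finally show "0 < uD"
    unfolding parameters_pos_iff by (rule pos_of_pos_mult_square)
qed

lemma chart_signs_if_parameters_pos:
  assumes "0 < uA" "0 < uB" "0 < uC" "0 < uD"
  shows "chart_signs acd abc (abd * bcd * abc) (abd * bcd * acd)"
proof -
  have "0 < (c \<bullet> B) * abd * ((a \<bullet> B) * bcd) * abc\<^sup>2" "0 < (d \<bullet> C) * abc * ((b \<bullet> C) * acd) * (abd * bcd)\<^sup>2"
    "0 < (a \<bullet> D) * bcd * ((c \<bullet> D) * abd) * acd\<^sup>2" "0 < (abd * abc * bcd * acd)\<^sup>2" "0 < (abd * abd * abc * bcd * acd)\<^sup>2"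
    using assms lines_nonconcurrent unfolding parameters_pos_iff by simp_all
  then show ?thesis
    using assms(1) lines_nonconcurrent unfolding chart_signs_def parameters_pos_iff
    by (simp add: power2_eq_square ac_simps)
qed

lemma inscribed_iff_parameters_pos:
  "inscribed A B C D a b c d \<longleftrightarrow> 0 < uA \<and> 0 < uB \<and> 0 < uC \<and> 0 < uD"
proof
  assume "inscribed A B C D a b c d"
  then show "0 < uA \<and> 0 < uB \<and> 0 < uC \<and> 0 < uD"
    using chart_signs_imp_parameters_pos unfolding inscribed_iff_chart_signs by blast
next
  assume "0 < uA \<and> 0 < uB \<and> 0 < uC \<and> 0 < uD"
  \<comment> \<open>This line at infinity turns the convexity conditions into squares.\<close>
  moreover define h where "h = (abd * bcd) *\<^sub>R a + c"
  moreover have "h \<bullet> (d \<times> a) = acd" "h \<bullet> (a \<times> b) = abc"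
    "h \<bullet> (b \<times> c) = abd * bcd * abc" "h \<bullet> (c \<times> d) = abd * bcd * acd"
    unfolding h_def
    by (simp_all add: inner_add_left dot_cross_self dot_cross_rotate[of a c d] dot_cross_rotate[of c a b])
  ultimately show "inscribed A B C D a b c d"
    unfolding inscribed_iff_chart_signs using chart_signs_if_parameters_pos by metis
qed

end

theorem mainTheorem2:
  fixes A B C D a b c d :: "real^3"
  assumes "generic_flags4 [(A, a), (B, b), (C, c), (D, d)]"
  shows "inscribed A B C D a b c d \<longleftrightarrow>
    (let X = triple_ratio A a B b C c;
         Y = triple_ratio A a C c D d;
         Z = pencil_cross_ratio A a (line_through A B) (line_through A C) (line_through A D);
         W = pencil_cross_ratio C c (line_through C D) (line_through C A) (line_through C B)
     in X > 0 \<and> Y > 0 \<and> Z > 0 \<and> W > 0)"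
proof -
  interpret generic_four_flags A B C D a b c d
    using assms by unfold_locales
  show ?thesis
    unfolding inscribed_iff_parameters_pos Let_def triple_ratio_ABC triple_ratio_ACD
      cross_ratio_at_A cross_ratio_at_C
    using pos_invariants_iff_pos_parameters by blast
qed

end
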